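(* Let $K$ be an infinite field, let $n\geq 5$ and $r$ be integers with $1<r<n-2$, and let $p(x,y)=[x,y]^r=(xy-yx)^r\in K\langle x,y\rangle$. Then $\mathrm{ord}(p)=r$ and $p(T_n(K))\neq T_n(K)^{(r-1)}$.
   Context: $T_n(K)$ denotes the algebra of $n\times n$ upper triangular matrices over $K$; $T_n(K)^{(t)}$ denotes the set of upper triangular matrices whose $(i,j)$ entries vanish whenever $j-i\leq t$. $p(T_n(K))=\{p(a,b):a,b\in T_n(K)\}$. The order $\mathrm{ord}(p)$ is the least positive integer $r$ with $p(T_r(K))=\{0\}$ but $p(T_{r+1}(K))\neq\{0\}$ (with $T_1(K)=K$). *)

theory Defs
  imports "Jordan_Normal_Form.Matrix"
begin

definition UT :: "nat \<Rightarrow> 'a::field mat set" where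
  "UT n = {A. A \<in> carrier_mat n n \<and> upper_triangular A}"

text \<open>T_n(K)^(t): upper triangular n x n matrices whose (i,j) entries vanish
  whenever j - i \<le> t (indices 0-based, differences as integers).\<close>
definition UT_strict :: "nat \<Rightarrow> int \<Rightarrow> 'a::field mat set" where
  "UT_strict n t = {A. A \<in> UT n \<and>
     (\<forall>i<n. \<forall>j<n. int j - int i \<le> t \<longrightarrow> A $$ (i,j) = 0)}"

definition comm_pow :: "nat \<Rightarrow> 'a::field mat \<Rightarrow> 'a mat \<Rightarrow> 'a mat" where
  "comm_pow r a b = (a * b - b * a) ^\<^sub>m r"

definition image_UT :: "('a::field mat \<Rightarrow> 'a mat \<Rightarrow> 'a mat) \<Rightarrow> nat \<Rightarrow> 'a mat set" where
  "image_UT p n = {p a b | a b. a \<in> UT n \<and> b \<in> UT n}"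

definition ord_poly :: "('a::field mat \<Rightarrow> 'a mat \<Rightarrow> 'a mat) \<Rightarrow> nat" where
  "ord_poly p = (LEAST r. 0 < r \<and> image_UT p r = {0\<^sub>m r r}
                          \<and> image_UT p (Suc r) \<noteq> {0\<^sub>m (Suc r) (Suc r)})"

end

theory Submission
  imports Defs
begin

text \<open>For a, b upper triangular the commutator N = [a,b] has zero diagonal, so N^r vanishes
  below the r-th superdiagonal and its (i, i+r) entry is the product of the superdiagonal
  entries N(i,i+1) \<dots> N(i+r-1,i+r). Hence [x,y]^r vanishes on T_m for m \<le> r, while on T_{r+1} the
  diagonal parity matrix and the shift give superdiagonal entries \<plusminus>1 and a nonzero value.
  For the second claim, take E_{0,r} + E_{2,r+2}: if it were [a,b]^r, the superdiagonal entries
  N(k,k+1) would be nonzero for k < r and for 2 \<le> k \<le> r+1, so the (1, 1+r) entry, the product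
  over 1 \<le> k \<le> r, could not vanish.\<close>

definition upper_band :: "nat \<Rightarrow> nat \<Rightarrow> 'a::zero mat \<Rightarrow> bool" where
  "upper_band n s A \<longleftrightarrow> A \<in> carrier_mat n n \<and> (\<forall>i<n. \<forall>j<n. j < i + s \<longrightarrow> A $$ (i,j) = 0)"

lemma upper_bandD:
  "upper_band n s A \<Longrightarrow> i < n \<Longrightarrow> j < n \<Longrightarrow> j < i + s \<Longrightarrow> A $$ (i,j) = 0"
  unfolding upper_band_def by blast

lemma upper_band_carrier: "upper_band n s A \<Longrightarrow> A \<in> carrier_mat n n"
  unfolding upper_band_def by blast

lemma upper_band_eq_0:
  assumes "upper_band n s A" "n \<le> s"
  shows "A = 0\<^sub>m n n"
  using assms upper_band_carrier[OF assms(1)]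
  by (intro eq_matI) (auto intro: upper_bandD)

lemma UT_imp_upper_band: "a \<in> UT n \<Longrightarrow> upper_band n 0 a"
  unfolding UT_def upper_band_def by (auto intro: upper_triangularD)

lemma upper_band_mult:
  fixes A B :: "'a::semiring_0 mat"
  assumes A: "upper_band n s A" and B: "upper_band n t B"
  shows "upper_band n (s + t) (A * B)"
  unfolding upper_band_def
proof (intro conjI allI impI)
  show "A * B \<in> carrier_mat n n"
    using upper_band_carrier[OF A] upper_band_carrier[OF B] by simp
  fix i j assume ij: "i < n" "j < n" "j < i + (s + t)"
  have "(A * B) $$ (i,j) = (\<Sum>k<n. A $$ (i,k) * B $$ (k,j))"
    using A B ij by (auto dest!: upper_band_carrier simp: scalar_prod_def atLeast0LessThan)
  also have "\<dots> = 0"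
  proof (intro sum.neutral ballI)
    fix k assume "k \<in> {..<n}"
    then show "A $$ (i,k) * B $$ (k,j) = 0"
      using ij upper_bandD[OF A, of i k] upper_bandD[OF B, of k j]
      by (cases "k < i + s") auto
  qed
  finally show "(A * B) $$ (i,j) = 0" .
qed

lemma upper_band_mult_corner:
  fixes A B :: "'a::semiring_0 mat"
  assumes A: "upper_band n s A" and B: "upper_band n t B" and lt: "i + s + t < n"
  shows "(A * B) $$ (i, i + s + t) = A $$ (i, i + s) * B $$ (i + s, i + s + t)"
proof -
  let ?f = "\<lambda>k. A $$ (i,k) * B $$ (k, i + s + t)"
  have "(A * B) $$ (i, i + s + t) = (\<Sum>k<n. ?f k)"
    using A B lt by (auto dest!: upper_band_carrier simp: scalar_prod_def atLeast0LessThan)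
  also have "\<dots> = ?f (i + s) + (\<Sum>k\<in>{..<n} - {i + s}. ?f k)"
    using lt by (subst sum.remove[of _ "i + s"]) auto
  also have "(\<Sum>k\<in>{..<n} - {i + s}. ?f k) = 0"
  proof (intro sum.neutral ballI)
    fix k assume "k \<in> {..<n} - {i + s}"
    then show "?f k = 0"
      using lt upper_bandD[OF A, of i k] upper_bandD[OF B, of k "i + s + t"]
      by (cases "k < i + s") auto
  qed
  finally show ?thesis by simp
qed

lemma upper_band_power:
  fixes N :: "'a::semiring_1 mat"
  assumes "upper_band n 1 N"
  shows "upper_band n m (N ^\<^sub>m m)"
proof (induction m)
  case 0
  then show ?case
    using upper_band_carrier[OF assms] by (auto simp: upper_band_def)
next
  case (Suc m)
  then show ?case
    using upper_band_mult[OF Suc assms] by simp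
qed

lemma power_superdiag_entry:
  fixes N :: "'a::comm_semiring_1 mat"
  assumes N: "upper_band n 1 N"
  shows "i + m < n \<Longrightarrow> (N ^\<^sub>m m) $$ (i, i + m) = (\<Prod>k\<in>{i..<i + m}. N $$ (k, k + 1))"
proof (induction m)
  case 0
  then show ?case
    using upper_band_carrier[OF N] by simp
next
  case (Suc m)
  have "(N ^\<^sub>m Suc m) $$ (i, i + Suc m) = (N ^\<^sub>m m * N) $$ (i, i + m + 1)"
    by simp
  also have "\<dots> = (N ^\<^sub>m m) $$ (i, i + m) * N $$ (i + m, i + m + 1)"
    using upper_band_mult_corner[OF upper_band_power[OF N] N] Suc.prems by simp
  also have "\<dots> = (\<Prod>k\<in>{i..<i + Suc m}. N $$ (k, k + 1))"
    using Suc by simp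
  finally show ?case .
qed

lemma commutator_upper_band:
  fixes a b :: "'a::comm_ring mat"
  assumes a: "upper_band n 0 a" and b: "upper_band n 0 b"
  shows "upper_band n 1 (a * b - b * a)"
  unfolding upper_band_def
proof (intro conjI allI impI)
  have ca: "a \<in> carrier_mat n n" and cb: "b \<in> carrier_mat n n"
    using a b by (auto dest: upper_band_carrier)
  then show "a * b - b * a \<in> carrier_mat n n" by (auto intro: minus_carrier_mat)
  fix i j assume ij: "i < n" "j < n" "j < i + 1"
  show "(a * b - b * a) $$ (i,j) = 0"
  proof (cases "j < i")
    case True
    then show ?thesis
      using ij ca cb upper_bandD[OF upper_band_mult[OF a b], of i j]
        upper_bandD[OF upper_band_mult[OF b a], of i j]
      by simp
  next
    case False
    then have "j = i" using ij by simp
    then show ?thesis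
      using ij ca cb upper_band_mult_corner[OF a b, of i] upper_band_mult_corner[OF b a, of i]
      by (simp add: mult.commute)
  qed
qed

lemma comm_pow_superdiag_entry:
  fixes a b :: "'a::field mat"
  assumes "a \<in> UT n" "b \<in> UT n" "i + r < n"
  shows "comm_pow r a b $$ (i, i + r) = (\<Prod>k\<in>{i..<i + r}. (a * b - b * a) $$ (k, k + 1))"
  using assms unfolding comm_pow_def
  by (intro power_superdiag_entry commutator_upper_band UT_imp_upper_band)

lemma comm_pow_eq_0:
  fixes a b :: "'a::field mat"
  assumes "a \<in> UT m" "b \<in> UT m" "m \<le> r"
  shows "comm_pow r a b = 0\<^sub>m m m"
  unfolding comm_pow_def
  using assms upper_band_eq_0[OF upper_band_power[OF commutator_upper_band], of m a b r]
  by (simp add: UT_imp_upper_band)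

lemma zero_mat_UT: "0\<^sub>m m m \<in> UT m"
  unfolding UT_def upper_triangular_def by simp

lemma image_UT_comm_pow_eq_0:
  assumes "m \<le> r"
  shows "image_UT (comm_pow r :: 'a::field mat \<Rightarrow> 'a mat \<Rightarrow> 'a mat) m = {0\<^sub>m m m}"
proof -
  have "0\<^sub>m m m = comm_pow r (0\<^sub>m m m) (0\<^sub>m m m :: 'a mat)"
    using comm_pow_eq_0[OF zero_mat_UT zero_mat_UT assms] by (rule sym)
  then have "0\<^sub>m m m \<in> image_UT (comm_pow r :: 'a mat \<Rightarrow> 'a mat \<Rightarrow> 'a mat) m"
    unfolding image_UT_def using zero_mat_UT by blast
  then show ?thesis
    using comm_pow_eq_0[OF _ _ assms] unfolding image_UT_def by blast
qed

lemma image_UT_comm_pow_Suc_ne_0: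
  "image_UT (comm_pow r :: 'a::field mat \<Rightarrow> 'a mat \<Rightarrow> 'a mat) (Suc r) \<noteq> {0\<^sub>m (Suc r) (Suc r)}"
proof
  define n where "n = Suc r"
  define a :: "'a mat" where "a = mat n n (\<lambda>(i,j). if i = j \<and> odd i then 1 else 0)"
  define b :: "'a mat" where "b = mat n n (\<lambda>(i,j). if j = i + 1 then 1 else 0)"
  have aU: "a \<in> UT n" and bU: "b \<in> UT n"
    unfolding UT_def a_def b_def by auto
  have superdiag: "(a * b - b * a) $$ (k, k + 1) \<noteq> 0" if "k + 1 < n" for k
  proof -
    have "(a * b - b * a) $$ (k, k + 1) = a $$ (k,k) * b $$ (k, k + 1) - b $$ (k, k + 1) * a $$ (k + 1, k + 1)"
      using that upper_band_mult_corner[OF UT_imp_upper_band[OF aU], where t=1 and B=b and i=k]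
        upper_band_mult_corner[OF _ UT_imp_upper_band[OF aU], where s=1 and A=b and i=k]
      by (auto simp: upper_band_def a_def b_def)
    also have "\<dots> = (if odd k then 1 else -1)"
      using that by (simp add: a_def b_def)
    finally show ?thesis by simp
  qed
  have "comm_pow r a b $$ (0, r) \<noteq> 0"
    using comm_pow_superdiag_entry[OF aU bU, of 0] superdiag by (simp add: n_def)
  moreover assume "image_UT (comm_pow r :: 'a mat \<Rightarrow> 'a mat \<Rightarrow> 'a mat) (Suc r) = {0\<^sub>m (Suc r) (Suc r)}"
  then have "comm_pow r a b = 0\<^sub>m n n"
    using aU bU unfolding image_UT_def n_def by blast
  ultimately show False by (simp add: n_def)
qed

lemma ord_poly_comm_pow:
  assumes "0 < r"
  shows "ord_poly (comm_pow r :: 'a::field mat \<Rightarrow> 'a mat \<Rightarrow> 'a mat) = r"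
  unfolding ord_poly_def
proof (rule Least_equality)
  show "0 < r \<and> image_UT (comm_pow r :: 'a mat \<Rightarrow> 'a mat \<Rightarrow> 'a mat) r = {0\<^sub>m r r}
        \<and> image_UT (comm_pow r :: 'a mat \<Rightarrow> 'a mat \<Rightarrow> 'a mat) (Suc r) \<noteq> {0\<^sub>m (Suc r) (Suc r)}"
    using assms image_UT_comm_pow_eq_0[of r r] image_UT_comm_pow_Suc_ne_0 by auto
next
  fix m assume "0 < m \<and> image_UT (comm_pow r :: 'a mat \<Rightarrow> 'a mat \<Rightarrow> 'a mat) m = {0\<^sub>m m m}
        \<and> image_UT (comm_pow r :: 'a mat \<Rightarrow> 'a mat \<Rightarrow> 'a mat) (Suc m) \<noteq> {0\<^sub>m (Suc m) (Suc m)}"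
  then show "r \<le> m"
    using image_UT_comm_pow_eq_0[of "Suc m" r] by (cases "Suc m \<le> r") auto
qed

lemma image_UT_comm_pow_ne_UT_strict:
  assumes "1 < r" "r + 2 < n"
  shows "image_UT (comm_pow r :: 'a::field mat \<Rightarrow> 'a mat \<Rightarrow> 'a mat) n \<noteq> UT_strict n (int r - 1)"
proof
  define A :: "'a mat" where
    "A = mat n n (\<lambda>(i,j). if (i = 0 \<and> j = r) \<or> (i = 2 \<and> j = r + 2) then 1 else 0)"
  assume "image_UT (comm_pow r :: 'a mat \<Rightarrow> 'a mat \<Rightarrow> 'a mat) n = UT_strict n (int r - 1)"
  moreover have "A \<in> UT_strict n (int r - 1)"
    unfolding UT_strict_def UT_def A_def using assms by auto
  ultimately obtain a b where aU: "a \<in> UT n" and bU: "b \<in> UT n" and A: "A = comm_pow r a b"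
    unfolding image_UT_def by blast
  let ?N = "a * b - b * a"
  have entry: "A $$ (i, i + r) = (\<Prod>k\<in>{i..<i + r}. ?N $$ (k, k + 1))" if "i \<le> 2" for i
    using comm_pow_superdiag_entry[OF aU bU, of i r] that assms A by simp
  have "(\<Prod>k\<in>{0..<r}. ?N $$ (k, k + 1)) \<noteq> 0" "(\<Prod>k\<in>{2..<2 + r}. ?N $$ (k, k + 1)) \<noteq> 0"
    using entry[of 0] entry[of 2] assms by (simp_all add: A_def)
  then have "?N $$ (k, k + 1) \<noteq> 0" if "1 \<le> k" "k \<le> r" for k
    using that assms(1) by (cases "k < r") auto
  then have "(\<Prod>k\<in>{1..<1 + r}. ?N $$ (k, k + 1)) \<noteq> 0"
    by simp
  moreover have "A $$ (1, 1 + r) = 0"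
    using assms by (simp add: A_def)
  ultimately show False
    using entry[of 1] by simp
qed

theorem mainTheorem9:
  fixes n r :: nat
  assumes "infinite (UNIV :: 'a::field set)"
    and "n \<ge> 5" and "1 < r" and "r + 2 < n"
  shows "ord_poly (comm_pow r :: 'a mat \<Rightarrow> 'a mat \<Rightarrow> 'a mat) = r
         \<and> image_UT (comm_pow r :: 'a mat \<Rightarrow> 'a mat \<Rightarrow> 'a mat) n \<noteq> UT_strict n (int r - 1)"
  using ord_poly_comm_pow[of r] image_UT_comm_pow_ne_UT_strict[OF assms(3,4)] assms(3)
  by simp

end
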